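(* Every prime ideal of $C(X)_\mathcal{P}$ is either an essential ideal, or a maximal ideal which is also a minimal prime ideal.
   Context: Let $(X,\tau)$ be a $T_1$ topological space and $\mathcal{P}$ an ideal of closed subsets of $X$ (a nonempty family of closed sets closed under finite unions and under taking closed subsets). For $f\colon X\to\mathbb{R}$, $D_f$ denotes the set of points of discontinuity of $f$, and $C(X)_\mathcal{P}=\{f\colon X\to\mathbb{R} : \overline{D_f}\in\mathcal{P}\}$, a commutative ring with unity under pointwise operations. An ideal is essential if it intersects every nonzero ideal nontrivially. *)

theory Defs
  imports "HOL-Analysis.Analysis" "HOL-Algebra.Ideal"
begin

definition closed_set_ideal :: "'a::topological_space set set \<Rightarrow> bool" where
  "closed_set_ideal \<P> \<longleftrightarrow> \<P> \<noteq> {} \<and> (\<forall>A\<in>\<P>. closed A)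
     \<and> (\<forall>A\<in>\<P>. \<forall>B\<in>\<P>. A \<union> B \<in> \<P>)
     \<and> (\<forall>A\<in>\<P>. \<forall>B. closed B \<and> B \<subseteq> A \<longrightarrow> B \<in> \<P>)"

definition discont_set :: "('a::topological_space \<Rightarrow> real) \<Rightarrow> 'a set" where
  "discont_set f = {x. \<not> (f \<longlongrightarrow> f x) (at x)}"

definition CXP :: "'a::topological_space set set \<Rightarrow> ('a \<Rightarrow> real) set" where
  "CXP \<P> = {f. closure (discont_set f) \<in> \<P>}"

definition CXP_ring :: "'a::topological_space set set \<Rightarrow> ('a \<Rightarrow> real) ring" where
  "CXP_ring \<P> = \<lparr>carrier = CXP \<P>, monoid.mult = (\<lambda>f g x. f x * g x), one = (\<lambda>x. 1),
     zero = (\<lambda>x. 0), add = (\<lambda>f g x. f x + g x)\<rparr>"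

definition essential_ideal :: "'b set \<Rightarrow> ('b, 'm) ring_scheme \<Rightarrow> bool" where
  "essential_ideal I R \<longleftrightarrow> ideal I R \<and>
     (\<forall>J. ideal J R \<and> J \<noteq> {\<zero>\<^bsub>R\<^esub>} \<longrightarrow> I \<inter> J \<noteq> {\<zero>\<^bsub>R\<^esub>})"

definition minimal_prime_ideal :: "'b set \<Rightarrow> ('b, 'm) ring_scheme \<Rightarrow> bool" where
  "minimal_prime_ideal I R \<longleftrightarrow> primeideal I R \<and>
     (\<forall>J. primeideal J R \<and> J \<subseteq> I \<longrightarrow> J = I)"

end

theory Submission
  imports Defs
begin

text \<open>If the prime ideal I misses a nonzero ideal J, any nonzero f \<in> J satisfies f \<notin> I and
f I \<subseteq> I \<inter> J = 0, so I is the annihilator of f. Every prime contained in I contains f I = 0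
but not f, hence all of I: so I is a minimal prime. In C(X)_P the lattice operations give more:
splitting h^2 - t into its positive and negative parts, whose product is 0, shows that h^2 is
constant on the cozero set of f for every h. So modulo I every h is either 0 or invertible,
i.e. I is maximal.\<close>

context primeideal
begin

lemma not_essential_obtains_annihilator:
  assumes "\<not> essential_ideal I R"
  obtains f where "f \<in> carrier R" "f \<notin> I" "\<And>g. g \<in> I \<Longrightarrow> f \<otimes> g = \<zero>"
proof -
  obtain J where J: "ideal J R" "J \<noteq> {\<zero>}" "I \<inter> J = {\<zero>}"
    using assms is_ideal unfolding essential_ideal_def by blast
  have "\<zero> \<in> J"
    using J(1) by (simp add: additive_subgroup.zero_closed ideal.axioms(1))
  then obtain f where f: "f \<in> J" "f \<noteq> \<zero>"
    using J(2) by blast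
  show thesis
  proof
    show f_carr: "f \<in> carrier R"
      using J(1) f(1) by (rule ideal.Icarr)
    show "f \<notin> I"
      using f J(3) by blast
    fix g assume "g \<in> I"
    then have "f \<otimes> g \<in> I \<inter> J"
      using I_l_closed f_carr ideal.I_r_closed[OF J(1) f(1) Icarr] by blast
    then show "f \<otimes> g = \<zero>"
      using J(3) by blast
  qed
qed

lemma minimal_prime_ideal_if_annihilator:
  assumes f: "f \<in> carrier R" "f \<notin> I" and ann: "\<And>g. g \<in> I \<Longrightarrow> f \<otimes> g = \<zero>"
  shows "minimal_prime_ideal I R"
  unfolding minimal_prime_ideal_def
proof (intro conjI allI impI primeideal)
  fix Q assume Q: "primeideal Q R \<and> Q \<subseteq> I"
  have "I \<subseteq> Q"
  proof
    fix g assume g: "g \<in> I"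
    have "\<zero> \<in> Q"
      using Q by (meson additive_subgroup.zero_closed ideal.axioms(1) primeideal.axioms(1))
    then have "f \<in> Q \<or> g \<in> Q"
      using Q f(1) Icarr[OF g] ann[OF g] primeideal.I_prime by metis
    then show "g \<in> Q"
      using Q f(2) by blast
  qed
  then show "Q = I"
    using Q by blast
qed

end

lemma CXP_ring_simps [simp]:
  "carrier (CXP_ring \<P>) = CXP \<P>"
  "f \<otimes>\<^bsub>CXP_ring \<P>\<^esub> g = (\<lambda>x. f x * g x)"
  "f \<oplus>\<^bsub>CXP_ring \<P>\<^esub> g = (\<lambda>x. f x + g x)"
  "\<zero>\<^bsub>CXP_ring \<P>\<^esub> = (\<lambda>x. 0)"
  "\<one>\<^bsub>CXP_ring \<P>\<^esub> = (\<lambda>x. 1)"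
  by (simp_all add: CXP_ring_def)

lemma CXP_continuous_comp:
  assumes \<P>: "closed_set_ideal \<P>" and g: "g \<in> CXP \<P>" and \<phi>: "continuous_on UNIV \<phi>"
  shows "(\<lambda>x. \<phi> (g x)) \<in> CXP \<P>"
proof -
  have "discont_set (\<lambda>x. \<phi> (g x)) \<subseteq> discont_set g"
    using \<phi> isCont_tendsto_compose
    unfolding discont_set_def continuous_on_eq_continuous_at[OF open_UNIV] by blast
  then have "closure (discont_set (\<lambda>x. \<phi> (g x))) \<subseteq> closure (discont_set g)"
    by (rule closure_mono)
  moreover have "closure (discont_set g) \<in> \<P>"
    using g by (simp add: CXP_def)
  ultimately show ?thesis
    using \<P> unfolding closed_set_ideal_def CXP_def by blast
qed

lemma CXP_primeideal_square_eq_on_cozero: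
  assumes \<P>: "closed_set_ideal \<P>" and I: "primeideal I (CXP_ring \<P>)"
    and ann: "\<And>g x. g \<in> I \<Longrightarrow> f x * g x = 0"
    and h: "h \<in> CXP \<P>" and fx: "f x \<noteq> 0" and fy: "f y \<noteq> 0"
  shows "(h x)\<^sup>2 = (h y)\<^sup>2"
proof -
  interpret primeideal I "CXP_ring \<P>" by (rule I)
  have "\<not> (h a)\<^sup>2 < (h b)\<^sup>2" if "f a \<noteq> 0" "f b \<noteq> 0" for a b
  proof
    assume lt: "(h a)\<^sup>2 < (h b)\<^sup>2"
    define t where "t = ((h a)\<^sup>2 + (h b)\<^sup>2) / 2"
    define pos where "pos = (\<lambda>z. max ((h z)\<^sup>2 - t) 0)"
    define neg where "neg = (\<lambda>z. min ((h z)\<^sup>2 - t) 0)"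
    have "pos \<in> CXP \<P>" "neg \<in> CXP \<P>"
      unfolding pos_def neg_def by (intro CXP_continuous_comp[OF \<P> h] continuous_intros)+
    moreover have "(\<lambda>z. pos z * neg z) = (\<lambda>z. 0)"
      unfolding pos_def neg_def by (rule ext) (simp add: max_def min_def)
    ultimately have "pos \<in> I \<or> neg \<in> I"
      using I_prime[of pos neg] additive_subgroup.zero_closed[OF is_additive_subgroup] by simp
    then show False
      using ann[of pos b] ann[of neg a] that lt unfolding pos_def neg_def t_def
      by (auto simp: max_def min_def split: if_splits)
  qed
  then show ?thesis
    using fx fy by (meson linorder_neqE_linordered_idom)
qed

lemma CXP_primeideal_maximal_if_annihilator:
  assumes \<P>: "closed_set_ideal \<P>" and I: "primeideal I (CXP_ring \<P>)"
    and f: "f \<in> CXP \<P>" "f \<notin> I" and ann: "\<And>g x. g \<in> I \<Longrightarrow> f x * g x = 0"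
  shows "maximalideal I (CXP_ring \<P>)"
proof -
  interpret primeideal I "CXP_ring \<P>" by (rule I)
  have vanishing_on_cozero: "g \<in> I" if "g \<in> CXP \<P>" "\<And>x. f x \<noteq> 0 \<Longrightarrow> g x = 0" for g
  proof -
    have "(\<lambda>x. f x * g x) = (\<lambda>x. 0)"
      using that(2) by force
    then show ?thesis
      using I_prime[of f g] f that(1) additive_subgroup.zero_closed[OF is_additive_subgroup]
      by simp
  qed
  obtain x0 where x0: "f x0 \<noteq> 0"
    using f(2) vanishing_on_cozero[OF f(1)] by blast
  show ?thesis
  proof (rule maximalidealI[OF is_ideal I_notcarr])
    fix K assume K: "ideal K (CXP_ring \<P>)" "I \<subseteq> K" "K \<subseteq> carrier (CXP_ring \<P>)"
    show "K = I \<or> K = carrier (CXP_ring \<P>)"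
    proof (cases "K = I")
      case False
      then obtain h where h: "h \<in> K" "h \<notin> I"
        using K(2) by blast
      have h_carr: "h \<in> CXP \<P>"
        using h(1) K(3) by auto
      define c where "c = (h x0)\<^sup>2"
      have on_cozero: "(h x)\<^sup>2 = c" if "f x \<noteq> 0" for x
        unfolding c_def by (rule CXP_primeideal_square_eq_on_cozero[OF \<P> I _ h_carr that x0]) (fact ann)
      have "c \<noteq> 0"
        using h(2) vanishing_on_cozero[OF h_carr] on_cozero by force
      define u where "u = (\<lambda>x. 1 - (h x)\<^sup>2 / c)"
      have "u \<in> CXP \<P>"
        unfolding u_def
        by (intro CXP_continuous_comp[OF \<P> h_carr] continuous_intros) (use \<open>c \<noteq> 0\<close> in auto)
      then have "u \<in> K"
        using vanishing_on_cozero on_cozero \<open>c \<noteq> 0\<close> K(2) unfolding u_def by auto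
      moreover have "(\<lambda>x. h x / c) \<in> CXP \<P>"
        by (intro CXP_continuous_comp[OF \<P> h_carr] continuous_intros) (use \<open>c \<noteq> 0\<close> in auto)
      ultimately have "h \<otimes>\<^bsub>CXP_ring \<P>\<^esub> (\<lambda>x. h x / c) \<oplus>\<^bsub>CXP_ring \<P>\<^esub> u \<in> K"
        using K(1) h(1)
        by (metis CXP_ring_simps(1) additive_subgroup.a_closed ideal.axioms(1) ideal.I_r_closed)
      moreover have "h \<otimes>\<^bsub>CXP_ring \<P>\<^esub> (\<lambda>x. h x / c) \<oplus>\<^bsub>CXP_ring \<P>\<^esub> u = \<one>\<^bsub>CXP_ring \<P>\<^esub>"
        unfolding u_def by (simp add: power2_eq_square)
      ultimately show ?thesis
        using ideal.one_imp_carrier[OF K(1)] by simp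
    qed simp
  qed
qed

theorem corollary2p17:
  fixes \<P> :: "'a::t1_space set set" and I :: "('a \<Rightarrow> real) set"
  assumes "closed_set_ideal \<P>"
    and "primeideal I (CXP_ring \<P>)"
  shows "essential_ideal I (CXP_ring \<P>) \<or>
         (maximalideal I (CXP_ring \<P>) \<and> minimal_prime_ideal I (CXP_ring \<P>))"
proof (cases "essential_ideal I (CXP_ring \<P>)")
  case False
  then obtain f where f: "f \<in> CXP \<P>" "f \<notin> I"
    and ann: "\<And>g. g \<in> I \<Longrightarrow> f \<otimes>\<^bsub>CXP_ring \<P>\<^esub> g = \<zero>\<^bsub>CXP_ring \<P>\<^esub>"
    using primeideal.not_essential_obtains_annihilator[OF assms(2)] by (metis CXP_ring_simps(1))
  have "f x * g x = 0" if "g \<in> I" for g x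
    using ann[OF that] by (simp add: fun_eq_iff)
  then have "maximalideal I (CXP_ring \<P>)"
    by (rule CXP_primeideal_maximal_if_annihilator[OF assms f])
  moreover have "minimal_prime_ideal I (CXP_ring \<P>)"
    using primeideal.minimal_prime_ideal_if_annihilator[OF assms(2)] f ann by simp
  ultimately show ?thesis
    by blast
qed simp

end
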